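(* In noiseless non-adaptive group testing with $N$ items and $K$ defectives, with random Bernoulli$(1/K)$ design and maximum-likelihood decoding, in the regime $N,K\to\infty$ with $K=o(N)$, approximate reconstruction of the defective set with up to $\alpha K$ misses (for a fixed small $\alpha\in(0,1)$) is achievable with $T=O(K\log N)$ tests, i.e. the probability that the decoded $K$-set misses more than $\alpha K$ defectives can be made arbitrarily small.
   Context: Design: $N\times T$ binary matrix with i.i.d. Bernoulli$(1/K)$ entries, $X_j(t)=1$ iff item $j$ is in test $t$. Noiseless outcomes $Y(t)=\bigvee_{j\in S}X_j(t)$ for the defective set $S$, $|S|=K$. The ML decoder outputs a $K$-subset $S'$ maximizing $p(Y^T\mid\mathbf X_{S'})$; an error is declared only if $|S\setminus S'|>\alpha K$. Probabilities are averaged over the random design and over $S$ uniform among $K$-subsets. *)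

theory Defs
  imports "HOL-Probability.Probability"
begin

text \<open>Items are 0..N-1, tests are 0..T-1. A design is X :: nat \<times> nat \<Rightarrow> bool,
  X (j,t) = True iff item j is in test t.\<close>

definition ksubsets :: "nat \<Rightarrow> nat \<Rightarrow> nat set set" where
  "ksubsets N K = {S. S \<subseteq> {0..<N} \<and> card S = K}"

definition outcome :: "nat \<Rightarrow> (nat \<times> nat \<Rightarrow> bool) \<Rightarrow> nat set \<Rightarrow> (nat \<Rightarrow> bool)" where
  "outcome T X S = (\<lambda>t. t < T \<and> (\<exists>j\<in>S. X (j, t)))"

definition likelihood :: "nat \<Rightarrow> (nat \<times> nat \<Rightarrow> bool) \<Rightarrow> nat set \<Rightarrow> (nat \<Rightarrow> bool) \<Rightarrow> real" where
  "likelihood T X S' Y = (if outcome T X S' = Y then 1 else 0)"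

definition ml_outputs :: "nat \<Rightarrow> nat \<Rightarrow> nat \<Rightarrow> (nat \<times> nat \<Rightarrow> bool) \<Rightarrow> (nat \<Rightarrow> bool) \<Rightarrow> nat set set" where
  "ml_outputs N K T X Y = {S' \<in> ksubsets N K. \<forall>S''\<in>ksubsets N K. likelihood T X S'' Y \<le> likelihood T X S' Y}"

text \<open>Error event (worst-case tie breaking): some ML output misses more than alpha K defectives.\<close>
definition ml_error :: "nat \<Rightarrow> nat \<Rightarrow> nat \<Rightarrow> real \<Rightarrow> (nat \<times> nat \<Rightarrow> bool) \<Rightarrow> nat set \<Rightarrow> bool" where
  "ml_error N K T \<alpha> X S = (\<exists>S'\<in>ml_outputs N K T X (outcome T X S). real (card (S - S')) > \<alpha> * real K)"

definition design :: "nat \<Rightarrow> nat \<Rightarrow> nat \<Rightarrow> (nat \<times> nat \<Rightarrow> bool) pmf" where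
  "design N K T = Pi_pmf ({0..<N} \<times> {0..<T}) False (\<lambda>_. bernoulli_pmf (1 / real K))"

definition err_prob :: "nat \<Rightarrow> nat \<Rightarrow> nat \<Rightarrow> real \<Rightarrow> real" where
  "err_prob N K T \<alpha> = measure_pmf.prob (pair_pmf (design N K T) (pmf_of_set (ksubsets N K)))
      {(X, S). ml_error N K T \<alpha> X S}"

end

theory Submission
  imports Defs
begin

text \<open>Fix the defective set \<open>S\<close>. An ML output \<open>S'\<close> reproduces the observed outcomes, so no
  test contains an item of \<open>S - S'\<close> while avoiding \<open>S'\<close>. For \<open>|S - S'| > \<alpha> K\<close> a single
  Bernoulli(\<open>1/K\<close>) test has this separating property with probability
  \<open>(1 - 1/K)^K (1 - (1 - 1/K)^{|S - S'|}) \<ge> c = e^{-2} (1 - e^{-\<alpha>})\<close>, and the tests are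
  independent, so \<open>S'\<close> survives with probability at most \<open>(1 - c)^T\<close>. A union bound over the
  at most \<open>N choose K \<le> N^K\<close> candidates bounds the error by \<open>N^K e^{-cT}\<close>, which is at most
  \<open>1/K\<close> once \<open>T \<ge> (2/c) K ln N\<close>.\<close>

definition separating_test :: "nat set \<Rightarrow> nat set \<Rightarrow> (nat \<times> nat \<Rightarrow> bool) \<Rightarrow> nat \<Rightarrow> bool" where
  "separating_test D S' X t \<longleftrightarrow> (\<exists>j\<in>D. X (j, t)) \<and> (\<forall>i\<in>S'. \<not> X (i, t))"

lemma measure_pmf_prob_pair_pmf_Times:
  "measure_pmf.prob (pair_pmf M N) (A \<times> B) = measure_pmf.prob M A * measure_pmf.prob N B"
proof -
  have "measure_pmf.prob (pair_pmf M N) (A \<times> B) =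
        measure_pmf.prob (pair_pmf M N) ((A \<inter> set_pmf M) \<times> (B \<inter> set_pmf N))"
    by (subst (1 2) measure_Int_set_pmf[symmetric]) (auto intro!: arg_cong[where f="measure_pmf.prob _"])
  also have "\<dots> = measure_pmf.prob M (A \<inter> set_pmf M) * measure_pmf.prob N (B \<inter> set_pmf N)"
    by (rule measure_pmf_prob_product) auto
  finally show ?thesis
    by (simp add: measure_Int_set_pmf)
qed

lemma measure_pmf_prob_pair_pmf_le:
  assumes "\<And>y. y \<in> set_pmf N \<Longrightarrow> measure_pmf.prob M {x. (x, y) \<in> E} \<le> b"
  shows "measure_pmf.prob (pair_pmf M N) E \<le> b"
proof -
  obtain y0 where "y0 \<in> set_pmf N"
    using set_pmf_not_empty[of N] by blast
  hence b: "0 \<le> b"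
    using assms measure_nonneg order_trans by blast
  have "pair_pmf M N = bind_pmf N (\<lambda>y. map_pmf (\<lambda>x. (x, y)) M)"
    unfolding pair_pmf_def map_pmf_def by (rule bind_commute_pmf)
  hence "emeasure (pair_pmf M N) E = (\<integral>\<^sup>+y. emeasure M {x. (x, y) \<in> E} \<partial>N)"
    by (simp add: vimage_def)
  also have "\<dots> \<le> ennreal b"
    using assms by (intro measure_pmf.nn_integral_le_const AE_pmfI)
      (auto simp: measure_pmf.emeasure_eq_measure intro: ennreal_leI)
  finally show ?thesis
    using b by (simp add: measure_pmf.emeasure_eq_measure)
qed

lemma measure_Pi_pmf_columns:
  fixes P :: "nat \<Rightarrow> ('a \<times> nat \<Rightarrow> 'b) \<Rightarrow> bool"
  assumes I: "finite I"
    and column_local: "\<And>t f g. (\<And>i. i \<in> I \<Longrightarrow> f (i, t) = g (i, t)) \<Longrightarrow> P t f = P t g"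
  shows "measure_pmf.prob (Pi_pmf (I \<times> {0..<T}) d p) {X. \<forall>t<T. P t X}
           = (\<Prod>t<T. measure_pmf.prob (Pi_pmf (I \<times> {t}) d p) {g. P t g})"
proof (induction T)
  case 0
  then show ?case by simp
next
  case (Suc T)
  let ?A = "I \<times> {0..<T}" and ?B = "I \<times> {T}"
  define h where "h = (\<lambda>(f, g) x. if x \<in> ?A then f x else g x :: 'b)"
  have "Pi_pmf (I \<times> {0..<Suc T}) d p = map_pmf h (pair_pmf (Pi_pmf ?A d p) (Pi_pmf ?B d p))"
    unfolding h_def using I by (subst Pi_pmf_union[symmetric]) (auto intro!: arg_cong[where f="\<lambda>J. Pi_pmf J d p"])
  moreover have "h -` {X. \<forall>t<Suc T. P t X} = {f. \<forall>t<T. P t f} \<times> {g. P T g}"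
  proof -
    have "P t (h (f, g)) = P t f" if "t < T" for t f g
      using that by (intro column_local) (simp add: h_def)
    moreover have "P T (h (f, g)) = P T g" for f g
      by (intro column_local) (simp add: h_def)
    ultimately show ?thesis
      by (auto simp: less_Suc_eq)
  qed
  ultimately have "measure_pmf.prob (Pi_pmf (I \<times> {0..<Suc T}) d p) {X. \<forall>t<Suc T. P t X}
      = measure_pmf.prob (Pi_pmf ?A d p) {f. \<forall>t<T. P t f} * measure_pmf.prob (Pi_pmf ?B d p) {g. P T g}"
    by (simp add: measure_pmf_prob_pair_pmf_Times)
  then show ?case
    using Suc by simp
qed

lemma measure_Pi_pmf_bernoulli_all_False:
  assumes "finite I" "A \<subseteq> I" "0 \<le> q" "q \<le> 1"
  shows "measure_pmf.prob (Pi_pmf I d (\<lambda>_. bernoulli_pmf q)) {g. \<forall>x\<in>A. \<not> g x} = (1 - q) ^ card A"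
proof -
  have "{g. \<forall>x\<in>A. \<not> g x} = Pi I (\<lambda>x. if x \<in> A then {False} else UNIV)"
    using assms by (auto simp: Pi_def)
  hence "measure_pmf.prob (Pi_pmf I d (\<lambda>_. bernoulli_pmf q)) {g. \<forall>x\<in>A. \<not> g x}
      = (\<Prod>x\<in>I. if x \<in> A then 1 - q else 1)"
    using assms by (simp add: measure_Pi_pmf_Pi if_distrib measure_pmf_single cong: if_cong)
  also have "\<dots> = (1 - q) ^ card A"
    using assms by (simp add: prod.If_cases Int_absorb1)
  finally show ?thesis .
qed

lemma measure_separating_test:
  assumes "finite I" "D \<subseteq> I" "S' \<subseteq> I" "D \<inter> S' = {}" "0 \<le> q" "q \<le> 1"
  shows "measure_pmf.prob (Pi_pmf (I \<times> {t}) d (\<lambda>_. bernoulli_pmf q)) {g. separating_test D S' g t}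
           = (1 - q) ^ card S' - (1 - q) ^ (card S' + card D)"
proof -
  let ?M = "Pi_pmf (I \<times> {t}) d (\<lambda>_. bernoulli_pmf q)"
  have split: "{g. separating_test D S' g t} = {g. \<forall>x\<in>S' \<times> {t}. \<not> g x} - {g. \<forall>x\<in>(D \<union> S') \<times> {t}. \<not> g x}"
    by (auto simp: separating_test_def)
  have "measure_pmf.prob ?M {g. separating_test D S' g t}
      = measure_pmf.prob ?M {g. \<forall>x\<in>S' \<times> {t}. \<not> g x} - measure_pmf.prob ?M {g. \<forall>x\<in>(D \<union> S') \<times> {t}. \<not> g x}"
    unfolding split by (rule measure_pmf.finite_measure_Diff) auto
  also have "\<dots> = (1 - q) ^ card S' - (1 - q) ^ card (D \<union> S')"
    using assms by (subst (1 2) measure_Pi_pmf_bernoulli_all_False) (auto simp: card_cartesian_product)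
  also have "card (D \<union> S') = card S' + card D"
    using assms by (simp add: card_Un_disjoint finite_subset)
  finally show ?thesis .
qed

lemma measure_no_separating_test:
  assumes "D \<subseteq> {0..<N}" "S' \<subseteq> {0..<N}" "D \<inter> S' = {}" "0 \<le> q" "q \<le> 1"
  shows "measure_pmf.prob (Pi_pmf ({0..<N} \<times> {0..<T}) False (\<lambda>_. bernoulli_pmf q))
           {X. \<forall>t<T. \<not> separating_test D S' X t}
         = (1 - ((1 - q) ^ card S' - (1 - q) ^ (card S' + card D))) ^ T"
proof -
  let ?P = "\<lambda>t. Pi_pmf ({0..<N} \<times> {t}) False (\<lambda>_. bernoulli_pmf q)"
  have "measure_pmf.prob (?P t) {g. \<not> separating_test D S' g t}
      = 1 - ((1 - q) ^ card S' - (1 - q) ^ (card S' + card D))" for t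
    using measure_pmf.prob_compl[of "{g. separating_test D S' g t}" "?P t"]
      measure_separating_test[OF _ assms, of t False] by (simp add: set_diff_eq)
  moreover have "measure_pmf.prob (Pi_pmf ({0..<N} \<times> {0..<T}) False (\<lambda>_. bernoulli_pmf q))
           {X. \<forall>t<T. \<not> separating_test D S' X t} = (\<Prod>t<T. measure_pmf.prob (?P t) {g. \<not> separating_test D S' g t})"
    using assms by (intro measure_Pi_pmf_columns) (auto simp: separating_test_def subset_iff)
  ultimately show ?thesis
    by simp
qed

lemma one_minus_power_le_exp:
  fixes x :: real
  assumes "0 \<le> x" "x \<le> 1"
  shows "(1 - x) ^ n \<le> exp (- (real n * x))"
proof -
  have "(1 - x) ^ n \<le> exp (- x) ^ n"
    using assms exp_ge_add_one_self[of "- x"] by (intro power_mono) auto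
  thus ?thesis
    by (simp add: exp_of_nat_mult[symmetric])
qed

lemma exp_minus_two_le_one_minus_inverse_power:
  assumes "2 \<le> K"
  shows "exp (-2) \<le> (1 - 1 / real K) ^ K"
proof -
  have "- (1 / real K) - 2 * (1 / real K)\<^sup>2 \<le> ln (1 - 1 / real K)"
    using assms by (intro ln_one_minus_pos_lower_bound) (auto simp: field_simps)
  hence "real K * (- (1 / real K) - 2 * (1 / real K)\<^sup>2) \<le> real K * ln (1 - 1 / real K)"
    by (intro mult_left_mono) auto
  moreover have "real K * (- (1 / real K) - 2 * (1 / real K)\<^sup>2) = -1 - 2 / real K"
    using assms by (simp add: field_simps power2_eq_square)
  moreover have "2 / real K \<le> 1"
    using assms by (auto simp: field_simps)
  ultimately have "exp (-2) \<le> exp (real K * ln (1 - 1 / real K))"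
    by simp
  also have "\<dots> = (1 - 1 / real K) ^ K"
    using assms by (simp add: exp_of_nat_mult)
  finally show ?thesis .
qed

lemma separation_prob_lower_bound:
  assumes "2 \<le> K" "0 < \<alpha>" "\<alpha> * real K < real l"
  shows "exp (-2) * (1 - exp (-\<alpha>)) \<le> (1 - 1 / real K) ^ K - (1 - 1 / real K) ^ (K + l)"
proof -
  have q: "0 \<le> 1 - 1 / real K"
    using assms by (simp add: field_simps)
  have "(1 - 1 / real K) ^ l \<le> exp (- (real l * (1 / real K)))"
    using assms by (intro one_minus_power_le_exp) auto
  also have "\<dots> \<le> exp (- \<alpha>)"
    using assms by (auto simp: field_simps)
  finally have "1 - exp (-\<alpha>) \<le> 1 - (1 - 1 / real K) ^ l"
    by simp
  moreover have "0 \<le> 1 - exp (-\<alpha>)"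
    using assms by simp
  ultimately have "exp (-2) * (1 - exp (-\<alpha>)) \<le> (1 - 1 / real K) ^ K * (1 - (1 - 1 / real K) ^ l)"
    using exp_minus_two_le_one_minus_inverse_power[OF assms(1)] q by (intro mult_mono) auto
  thus ?thesis
    by (simp add: power_add algebra_simps)
qed

lemma finite_ksubsets: "finite (ksubsets N K)"
  unfolding ksubsets_def by (rule finite_subset[of _ "Pow {0..<N}"]) auto

lemma card_ksubsets: "card (ksubsets N K) = N choose K"
  unfolding ksubsets_def using n_subsets[of "{0..<N}" K] by simp

text \<open>The noiseless likelihood is an indicator, so every ML output reproduces the observed
  outcomes exactly.\<close>

lemma ml_error_imp_no_separating_test:
  assumes "S \<in> ksubsets N K" "ml_error N K T \<alpha> X S"
  obtains S' where "S' \<in> ksubsets N K" "\<alpha> * real K < real (card (S - S'))"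
    "\<forall>t<T. \<not> separating_test (S - S') S' X t"
proof -
  obtain S' where S': "S' \<in> ml_outputs N K T X (outcome T X S)" "\<alpha> * real K < real (card (S - S'))"
    using assms(2) unfolding ml_error_def by auto
  hence "S' \<in> ksubsets N K" "likelihood T X S (outcome T X S) \<le> likelihood T X S' (outcome T X S)"
    using assms(1) unfolding ml_outputs_def by auto
  moreover from this have "outcome T X S' = outcome T X S"
    unfolding likelihood_def by (auto split: if_splits)
  hence "\<not> separating_test (S - S') S' X t" if "t < T" for t
    using that fun_cong[of "outcome T X S'" "outcome T X S" t]
    unfolding separating_test_def outcome_def by auto
  ultimately show thesis
    using that S'(2) by blast
qed

lemma prob_ml_error_given_defectives:
  assumes "2 \<le> K" "0 < \<alpha>" "S \<in> ksubsets N K"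
  shows "measure_pmf.prob (design N K T) {X. ml_error N K T \<alpha> X S}
           \<le> real (N choose K) * (1 - exp (-2) * (1 - exp (-\<alpha>))) ^ T"
proof -
  define c where "c = exp (-2) * (1 - exp (-\<alpha>))"
  define F where "F = {S' \<in> ksubsets N K. \<alpha> * real K < real (card (S - S'))}"
  let ?E = "\<lambda>S'. {X. \<forall>t<T. \<not> separating_test (S - S') S' X t}"
  have "{X. ml_error N K T \<alpha> X S} \<subseteq> (\<Union>S'\<in>F. ?E S')"
    using ml_error_imp_no_separating_test[OF assms(3)] unfolding F_def by blast
  hence "measure_pmf.prob (design N K T) {X. ml_error N K T \<alpha> X S}
      \<le> (\<Sum>S'\<in>F. measure_pmf.prob (design N K T) (?E S'))"
    using finite_ksubsets[of N K] unfolding F_def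
    by (intro order_trans[OF measure_pmf.finite_measure_mono measure_pmf.finite_measure_subadditive_finite]) auto
  also have "\<dots> \<le> (\<Sum>S'\<in>F. (1 - c) ^ T)"
  proof (intro sum_mono)
    fix S' assume "S' \<in> F"
    hence S': "S' \<subseteq> {0..<N}" "card S' = K" "\<alpha> * real K < real (card (S - S'))"
      unfolding F_def ksubsets_def by auto
    have "measure_pmf.prob (design N K T) (?E S')
        = (1 - ((1 - 1 / real K) ^ K - (1 - 1 / real K) ^ (K + card (S - S')))) ^ T"
      using assms(1,3) S' unfolding design_def ksubsets_def
      by (subst measure_no_separating_test) auto
    also have "\<dots> \<le> (1 - c) ^ T"
    proof -
      have "0 \<le> 1 - 1 / real K" "1 - 1 / real K \<le> 1"
        using assms(1) by (auto simp: field_simps)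
      hence "(1 - 1 / real K) ^ K - (1 - 1 / real K) ^ (K + card (S - S')) \<le> 1"
        by (smt (verit) power_le_one zero_le_power)
      thus ?thesis
        using separation_prob_lower_bound[OF assms(1,2) S'(3)] unfolding c_def by (intro power_mono) auto
    qed
    finally show "measure_pmf.prob (design N K T) (?E S') \<le> (1 - c) ^ T" .
  qed
  also have "\<dots> \<le> real (N choose K) * (1 - c) ^ T"
  proof -
    have "card F \<le> card (ksubsets N K)"
      unfolding F_def by (rule card_mono[OF finite_ksubsets]) auto
    moreover have "0 \<le> (1 - c) ^ T"
      using assms by (simp add: c_def mult_le_one)
    ultimately show ?thesis
      by (simp add: card_ksubsets mult_right_mono)
  qed
  finally show ?thesis
    unfolding c_def .
qed

lemma err_prob_le:
  assumes "2 \<le> K" "0 < \<alpha>"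
  shows "err_prob N K T \<alpha> \<le> real (N choose K) * (1 - exp (-2) * (1 - exp (-\<alpha>))) ^ T"
proof (cases "ksubsets N K = {}")
  case True
  hence no_error: "{(X, S). ml_error N K T \<alpha> X S} = {}"
    unfolding ml_error_def ml_outputs_def by auto
  have "exp (-2) * (1 - exp (-\<alpha>)) \<le> 1"
    using assms by (intro mult_le_one) auto
  thus ?thesis
    unfolding err_prob_def no_error by simp
next
  case False
  hence "set_pmf (pmf_of_set (ksubsets N K)) = ksubsets N K"
    by (simp add: finite_ksubsets)
  thus ?thesis
    unfolding err_prob_def
    by (intro measure_pmf_prob_pair_pmf_le) (simp add: prob_ml_error_given_defectives[OF assms])
qed

lemma choose_mult_power_le_inverse:
  fixes c :: real
  assumes "2 \<le> K" "0 < c" "c \<le> 1" "2 / c * real K * ln (real N) \<le> real T"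
  shows "real (N choose K) * (1 - c) ^ T \<le> 1 / real K"
proof (cases "K \<le> N")
  case True
  have N: "0 < real N" "real K \<le> real N"
    using assms True by auto
  have "real (N choose K) \<le> exp (real K * ln (real N))"
    using binomial_le_pow[OF True] N by (simp add: exp_of_nat_mult flip: of_nat_power)
  moreover have "(1 - c) ^ T \<le> exp (- (2 * real K * ln (real N)))"
  proof -
    have "(1 - c) ^ T \<le> exp (- (real T * c))"
      using assms by (intro one_minus_power_le_exp) auto
    also have "\<dots> \<le> exp (- (2 * real K * ln (real N)))"
      using assms mult_right_mono[OF assms(4), of c] by (simp add: field_simps)
    finally show ?thesis .
  qed
  ultimately have "real (N choose K) * (1 - c) ^ T \<le> exp (real K * ln (real N)) * exp (- (2 * real K * ln (real N)))"
    using assms by (intro mult_mono) auto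
  also have "\<dots> = exp (- (real K * ln (real N)))"
    by (simp flip: exp_add)
  also have "\<dots> \<le> exp (- ln (real N))"
    using assms N by (simp add: mult_le_cancel_right1)
  also have "\<dots> \<le> 1 / real K"
    using N assms by (simp add: exp_minus inverse_eq_divide frac_le)
  finally show ?thesis .
next
  case False
  thus ?thesis by (simp add: binomial_eq_0)
qed

lemma err_prob_le_inverse:
  assumes "2 \<le> K" "0 < \<alpha>"
    and "2 / (exp (-2) * (1 - exp (-\<alpha>))) * real K * ln (real N) \<le> real T"
  shows "err_prob N K T \<alpha> \<le> 1 / real K"
proof -
  have "0 < exp (-2) * (1 - exp (-\<alpha>))" "exp (-2) * (1 - exp (-\<alpha>)) \<le> 1"
    using assms by (auto intro: mult_le_one)
  with choose_mult_power_le_inverse[OF assms(1) _ _ assms(3)] show ?thesis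
    using err_prob_le[OF assms(1,2), of N T] by linarith
qed

theorem theorem6:
  fixes \<alpha> :: real
  assumes "0 < \<alpha>" and "\<alpha> < 1"
  shows "\<exists>C>0. \<forall>Ns Ks :: nat \<Rightarrow> nat.
           filterlim Ks at_top sequentially \<longrightarrow>
           ((\<lambda>n. real (Ks n) / real (Ns n)) \<longlongrightarrow> 0) sequentially \<longrightarrow>
           ((\<lambda>n. err_prob (Ns n) (Ks n) (nat \<lceil>C * real (Ks n) * ln (real (Ns n))\<rceil>) \<alpha>)
              \<longlongrightarrow> 0) sequentially"
proof (intro exI[of _ "2 / (exp (-2) * (1 - exp (-\<alpha>)))"] conjI allI impI)
  let ?C = "2 / (exp (-2) * (1 - exp (-\<alpha>)))"
  show "0 < ?C"
    using assms by simp
  fix Ns Ks :: "nat \<Rightarrow> nat"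
  assume K: "filterlim Ks at_top sequentially"
  let ?err = "\<lambda>n. err_prob (Ns n) (Ks n) (nat \<lceil>?C * real (Ks n) * ln (real (Ns n))\<rceil>) \<alpha>"
  have nonneg: "eventually (\<lambda>n. 0 \<le> ?err n) sequentially"
    by (simp add: err_prob_def)
  have "eventually (\<lambda>n. 2 \<le> Ks n) sequentially"
    using K by (simp add: filterlim_at_top)
  hence bound: "eventually (\<lambda>n. ?err n \<le> 1 / real (Ks n)) sequentially"
    by eventually_elim (intro err_prob_le_inverse assms(1) real_nat_ceiling_ge)
  have "(\<lambda>n. 1 / real (Ks n)) \<longlonglongrightarrow> 0"
    using filterlim_compose[OF filterlim_real_sequentially K]
    by (simp add: tendsto_inverse_0_at_top flip: inverse_eq_divide)
  thus "?err \<longlonglongrightarrow> 0"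
    by (rule tendsto_sandwich[OF nonneg bound tendsto_const])
qed

end
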